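(* Let $B=\mathbb{C}\oplus\mathbb{C}$ be the $\mathbb{Z}_2$-graded Hilbert space with $B_0=\mathrm{span}\{\ket{0}\}$ and $B_1=\mathrm{span}\{\ket{1}\}$, and let $\mathbf{LFM}$ be the monoidal category whose objects are the tensor powers $B^{\otimes n}$, $n\in\mathbb{N}$, and whose morphisms are the pure maps between them. Let $T$ be the monoidal signature with operations $\mathsf{swap}:2\to 2$, $\mathsf{dual}:0\to 2$, $\mathsf{dual}^\dagger:2\to 0$, $\mathsf{fswap}:2\to 2$, $\mathsf{black}_2:0\to 2$, $\mathsf{black}_3:0\to 3$, and $\mathsf{white}_z:0\to 2$ for every $z\in\mathbb{C}$, let $F[T]$ be the free PRO on $T$, and let $f:F[T]\to\mathbf{LFM}$ be the strict monoidal functor sending the object $n$ to $B^{\otimes n}$ and the generators to the linear maps $\mathsf{swap}\mapsto(\ket{b_1b_2}\mapsto\ket{b_2b_1})$; $\mathsf{dual}\mapsto(1\mapsto\ket{00}+\ket{11})$; $\mathsf{dual}^\dagger\mapsto(\ket{b_1b_2}\mapsto 1$ if $b_1=b_2$, $0$ otherwise$)$; $\mathsf{fswap}\mapsto(\ket{00}\mapsto\ket{00},\ \ket{10}\mapsto\ket{01},\ \ket{01}\mapsto\ket{10},\ \ket{11}\mapsto-\ket{11})$; $\mathsf{black}_2\mapsto(1\mapsto\ket{10}+\ket{01})$; $\mathsf{black}_3\mapsto(1\mapsto\ket{100}+\ket{010}+\ket{001})$; $\mathsf{white}_z\mapsto(1\mapsto\ket{00}+z\ket{11})$. Then $f$ is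 full: for all $n,m\in\mathbb{N}$, every morphism $B^{\otimes n}\to B^{\otimes m}$ of $\mathbf{LFM}$ is equal to $f(d)$ for some morphism $d:n\to m$ of $F[T]$.
   Context: A $\mathbb{Z}_2$-graded Hilbert space is a complex Hilbert space $H$ with a decomposition $H=H_0\oplus H_1$. A pure map $g:H\to K$ between $\mathbb{Z}_2$-graded Hilbert spaces is a bounded linear map which is either even ($g(H_0)\subseteq K_0$ and $g(H_1)\subseteq K_1$) or odd ($g(H_0)\subseteq K_1$ and $g(H_1)\subseteq K_0$). The tensor product is graded by $(H\otimes K)_0=(H_0\otimes K_0)\oplus(H_1\otimes K_1)$ and $(H\otimes K)_1=(H_0\otimes K_1)\oplus(H_1\otimes K_0)$, with unit $\mathbb{C}\oplus 0$; tensor products of pure maps are pure. We write $\ket{b_1\ldots b_n}=\ket{b_1}\otimes\cdots\otimes\ket{b_n}$ for $b_i\in\{0,1\}$. A PRO is a strict monoidal category whose objects are the natural numbers with monoidal product given on objects by addition; for a monoidal signature (a set of operations $g_i:n_i\to m_i$), the free PRO $F[T]$ has as morphisms the formal sequential and parallel composites of the operations, modulo the axioms of strict monoidal categories (equivalently, string diagrams up to planar isotopy). Here $B^{\otimes 0}=\mathbb{C}$ and a map $\mathbb{C}\to B^{\otimes n}$ is specified by the image of $1$. *)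

theory Defs
  imports Complex_Main
begin

text \<open>A linear map B^{\<otimes>n} \<rightarrow> B^{\<otimes>m} is represented by its matrix in the
computational basis: a function taking an output bit string (length m) and
an input bit string (length n) to a complex coefficient. Bit 1 is True.\<close>

type_synonym lmap = "bool list \<Rightarrow> bool list \<Rightarrow> complex"

definition bitstrings :: "nat \<Rightarrow> bool list set" where
  "bitstrings k = {xs. length xs = k}"

definition weight :: "bool list \<Rightarrow> nat" where
  "weight xs = length (filter id xs)"

definition even_map :: "nat \<Rightarrow> nat \<Rightarrow> lmap \<Rightarrow> bool" where
  "even_map n m M \<longleftrightarrow> (\<forall>out inp. length out = m \<longrightarrow> length inp = n \<longrightarrow>
      M out inp \<noteq> 0 \<longrightarrow> (even (weight out) \<longleftrightarrow> even (weight inp)))"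

definition odd_map :: "nat \<Rightarrow> nat \<Rightarrow> lmap \<Rightarrow> bool" where
  "odd_map n m M \<longleftrightarrow> (\<forall>out inp. length out = m \<longrightarrow> length inp = n \<longrightarrow>
      M out inp \<noteq> 0 \<longrightarrow> (even (weight out) \<longleftrightarrow> odd (weight inp)))"

definition pure_map :: "nat \<Rightarrow> nat \<Rightarrow> lmap \<Rightarrow> bool" where
  "pure_map n m M \<longleftrightarrow> even_map n m M \<or> odd_map n m M"

datatype gen = Swap | Dual | DualDag | FSwap | Black2 | Black3 | White complex

fun gdom :: "gen \<Rightarrow> nat" where
  "gdom Swap = 2" | "gdom Dual = 0" | "gdom DualDag = 2" | "gdom FSwap = 2"
| "gdom Black2 = 0" | "gdom Black3 = 0" | "gdom (White z) = 0"

fun gcod :: "gen \<Rightarrow> nat" where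
  "gcod Swap = 2" | "gcod Dual = 2" | "gcod DualDag = 0" | "gcod FSwap = 2"
| "gcod Black2 = 2" | "gcod Black3 = 3" | "gcod (White z) = 2"

fun gmat :: "gen \<Rightarrow> lmap" where
  "gmat Swap [c1, c2] [b1, b2] = (if c1 = b2 \<and> c2 = b1 then 1 else 0)"
| "gmat Dual [c1, c2] [] = (if c1 = c2 then 1 else 0)"
| "gmat DualDag [] [b1, b2] = (if b1 = b2 then 1 else 0)"
| "gmat FSwap [c1, c2] [b1, b2] =
     (if c1 = b2 \<and> c2 = b1 then (if b1 \<and> b2 then -1 else 1) else 0)"
| "gmat Black2 [c1, c2] [] = (if weight [c1, c2] = 1 then 1 else 0)"
| "gmat Black3 [c1, c2, c3] [] = (if weight [c1, c2, c3] = 1 then 1 else 0)"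
| "gmat (White z) [c1, c2] [] =
     (if \<not> c1 \<and> \<not> c2 then 1 else if c1 \<and> c2 then z else 0)"
| "gmat _ _ _ = 0"

text \<open>The equations of strict monoidal categories are
irrelevant for fullness, which only asks for existence of some term.\<close>
datatype diag = Gen gen | Id nat | Seq diag diag | Par diag diag

fun ddom :: "diag \<Rightarrow> nat" and dcod :: "diag \<Rightarrow> nat" where
  "ddom (Gen g) = gdom g" | "ddom (Id n) = n"
| "ddom (Seq d1 d2) = ddom d1" | "ddom (Par d1 d2) = ddom d1 + ddom d2"
| "dcod (Gen g) = gcod g" | "dcod (Id n) = n"
| "dcod (Seq d1 d2) = dcod d2" | "dcod (Par d1 d2) = dcod d1 + dcod d2"

text \<open>Well-formedness: Seq d1 d2 means d2 after d1, requiring cod d1 = dom d2.\<close>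
fun wf_diag :: "diag \<Rightarrow> bool" where
  "wf_diag (Gen g) = True" | "wf_diag (Id n) = True"
| "wf_diag (Seq d1 d2) = (wf_diag d1 \<and> wf_diag d2 \<and> dcod d1 = ddom d2)"
| "wf_diag (Par d1 d2) = (wf_diag d1 \<and> wf_diag d2)"

text \<open>The strict monoidal functor f: composition is matrix product, tensor is
the Kronecker product (first factor = leading bits).\<close>
fun interp :: "diag \<Rightarrow> lmap" where
  "interp (Gen g) out inp = gmat g out inp"
| "interp (Id n) out inp = (if out = inp then 1 else 0)"
| "interp (Seq d1 d2) out inp =
     (\<Sum>c\<in>bitstrings (dcod d1). interp d2 out c * interp d1 c inp)"
| "interp (Par d1 d2) out inp =
     interp d1 (take (dcod d1) out) (take (ddom d1) inp) *
     interp d2 (drop (dcod d1) out) (drop (ddom d1) inp)"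

end

(* Bending the n inputs of M into outputs with caps turns M into a state S on m + n qubits
   whose support has a single parity, so it suffices to realize such states. An odd state
   \<psi> = \<Sum> \<psi>(w)|w> is obtained from the anchored state |0...0> + \<Sum> \<psi>(w)|1w> by plugging its
   leading qubit with <1|; an even state is treated the same way after prepending a 1.
   Each anchored pair |0...0> + a|1w> grows out of a white vertex by inserting zeros and by
   copying a one into three. Anchored states are added by tensoring and merging bitwise: the
   merge gadget ORs disjointly supported strings and kills overlapping ones, so the anchor
   acts as a unit while every cross term vanishes because its two markers collide. *)

theory Submission
  imports Defs
begin

lemma bitstrings_iff [simp]: "xs \<in> bitstrings k \<longleftrightarrow> length xs = k"
  by (simp add: bitstrings_def)

lemma finite_bitstrings [simp]: "finite (bitstrings k)"
  using finite_lists_length_eq[of "UNIV :: bool set" k] by (simp add: bitstrings_def)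

lemma sum_eq_single_nonzero:
  assumes "finite A" "v \<in> A" "\<And>c. c \<in> A \<Longrightarrow> c \<noteq> v \<Longrightarrow> f c = 0"
  shows "sum f A = f v"
  using assms by (simp add: sum.remove sum.neutral)

lemma sum_sum_list_swap:
  "(\<Sum>c\<in>A. \<Sum>t\<leftarrow>ts. f c t) = (\<Sum>t\<leftarrow>ts. \<Sum>c\<in>A. f c t)"
  by (induction ts) (simp_all add: sum.distrib)

lemma sum_list_concat: "sum_list (concat xss) = (\<Sum>xs\<leftarrow>xss. sum_list xs)"
  by (induction xss) simp_all

lemma length_Suc_Suc_conv:
  "length x = Suc (Suc k) \<longleftrightarrow> (\<exists>a w b. x = a # w @ [b] \<and> length w = k)"
  by (cases x rule: rev_cases) (auto simp: length_Suc_conv)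

lemma length_Suc_Suc_add_conv:
  "length x = Suc (Suc (k + k)) \<longleftrightarrow> (\<exists>a u b v. x = a # u @ b # v \<and> length u = k \<and> length v = k)"
proof
  assume len: "length x = Suc (Suc (k + k))"
  then obtain a r where x: "x = a # r" by (cases x) auto
  with len obtain b v where r: "drop k r = b # v" by (cases "drop k r") auto
  have "r = take k r @ b # v"
    using r by (metis append_take_drop_id)
  moreover have "length v = k"
    using len x r by (metis length_drop diff_add_inverse length_Cons add_Suc_right Suc_inject)
  ultimately show "\<exists>a u b v. x = a # u @ b # v \<and> length u = k \<and> length v = k"
    using len x by (intro exI[of _ a] exI[of _ "take k r"] exI[of _ b] exI[of _ v]) auto
qed auto

lemma weight_Nil [simp]: "weight [] = 0"
  and weight_Cons [simp]: "weight (b # xs) = (if b then Suc (weight xs) else weight xs)"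
  and weight_append [simp]: "weight (xs @ ys) = weight xs + weight ys"
  and weight_rev [simp]: "weight (rev xs) = weight xs"
  by (simp_all add: weight_def rev_filter[symmetric])

definition realizable :: "nat \<Rightarrow> nat \<Rightarrow> lmap \<Rightarrow> bool" where
  "realizable n m M \<longleftrightarrow> (\<exists>d. wf_diag d \<and> ddom d = n \<and> dcod d = m \<and>
     (\<forall>out inp. length out = m \<longrightarrow> length inp = n \<longrightarrow> interp d out inp = M out inp))"

lemma realizable_cong:
  assumes "realizable n m A" "n' = n" "m' = m"
    and "\<And>y x. length y = m \<Longrightarrow> length x = n \<Longrightarrow> B y x = A y x"
  shows "realizable n' m' B"
  using assms unfolding realizable_def by metis

lemma realizable_seq:
  assumes "realizable n k A" "realizable k m B"
  shows "realizable n m (\<lambda>y x. \<Sum>c\<in>bitstrings k. B y c * A c x)"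
proof -
  obtain d1 d2 where "wf_diag d1" "ddom d1 = n" "dcod d1 = k"
      "\<forall>y x. length y = k \<longrightarrow> length x = n \<longrightarrow> interp d1 y x = A y x"
    and "wf_diag d2" "ddom d2 = k" "dcod d2 = m"
      "\<forall>y x. length y = m \<longrightarrow> length x = k \<longrightarrow> interp d2 y x = B y x"
    using assms unfolding realizable_def by blast
  then show ?thesis
    unfolding realizable_def by (intro exI[of _ "Seq d1 d2"]) (auto intro!: sum.cong)
qed

lemma realizable_par:
  assumes "realizable n1 m1 A" "realizable n2 m2 B"
  shows "realizable (n1 + n2) (m1 + m2)
    (\<lambda>y x. A (take m1 y) (take n1 x) * B (drop m1 y) (drop n1 x))"
proof -
  obtain d1 d2 where "wf_diag d1" "ddom d1 = n1" "dcod d1 = m1"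
      "\<forall>y x. length y = m1 \<longrightarrow> length x = n1 \<longrightarrow> interp d1 y x = A y x"
    and "wf_diag d2" "ddom d2 = n2" "dcod d2 = m2"
      "\<forall>y x. length y = m2 \<longrightarrow> length x = n2 \<longrightarrow> interp d2 y x = B y x"
    using assms unfolding realizable_def by blast
  then show ?thesis
    unfolding realizable_def by (intro exI[of _ "Par d1 d2"]) auto
qed

lemma realizable_gen: "realizable (gdom g) (gcod g) (gmat g)"
  unfolding realizable_def by (intro exI[of _ "Gen g"]) auto

lemma realizable_id: "realizable n n (\<lambda>y x. if y = x then 1 else 0)"
  unfolding realizable_def by (intro exI[of _ "Id n"]) auto

definition sparse_lmap :: "(bool list \<Rightarrow> (bool list \<times> complex) list) \<Rightarrow> lmap" where
  "sparse_lmap ts y x = (\<Sum>(c, a)\<leftarrow>ts x. if y = c then a else 0)"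

text \<open>Most gadgets send each basis vector to an explicit short combination of basis vectors;
  keeping these lists symbolic lets composites be computed by simplification.\<close>

definition realizable_sparse :: "nat \<Rightarrow> nat \<Rightarrow> (bool list \<Rightarrow> (bool list \<times> complex) list) \<Rightarrow> bool" where
  "realizable_sparse n m ts \<longleftrightarrow> realizable n m (sparse_lmap ts) \<and>
     (\<forall>x. length x = n \<longrightarrow> (\<forall>(c, a)\<in>set (ts x). length c = m))"

lemma sparse_lmap_single [simp]: "sparse_lmap (\<lambda>x. [(p x, f x)]) y x = (if y = p x then f x else 0)"
  by (simp add: sparse_lmap_def)

lemma realizable_sparseI:
  assumes "realizable n m M"
    and "\<And>y x. length y = m \<Longrightarrow> length x = n \<Longrightarrow> sparse_lmap ts y x = M y x"
    and "\<And>x. length x = n \<Longrightarrow> \<forall>(c, a)\<in>set (ts x). length c = m"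
  shows "realizable_sparse n m ts"
  unfolding realizable_sparse_def using realizable_cong[OF assms(1)] assms(2,3) by auto

lemma realizable_sparse_cong:
  assumes "realizable_sparse n m ts" "n' = n" "m' = m"
    and "\<And>x. length x = n \<Longrightarrow> us x = ts x"
  shows "realizable_sparse n' m' us"
  using assms unfolding realizable_sparse_def
  by (auto simp: sparse_lmap_def elim!: realizable_cong)

lemma realizable_sparse_lmap_cong:
  assumes "realizable_sparse n m ts" "n' = n" "m' = m"
    and "\<And>y x. length y = m \<Longrightarrow> length x = n \<Longrightarrow> sparse_lmap us y x = sparse_lmap ts y x"
    and "\<And>x. length x = n \<Longrightarrow> \<forall>(c, a)\<in>set (us x). length c = m"
  shows "realizable_sparse n' m' us"
  using realizable_sparseI[of n m "sparse_lmap ts" us] assms unfolding realizable_sparse_def by auto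

lemma realizable_sparse_id: "realizable_sparse n n (\<lambda>x. [(x, 1)])"
  unfolding realizable_sparse_def sparse_lmap_def using realizable_id by simp

lemma realizable_sparse_seq_realizable:
  assumes "realizable_sparse n k ts" "realizable k m B"
  shows "realizable n m (\<lambda>y x. \<Sum>(c, a)\<leftarrow>ts x. B y c * a)"
proof (rule realizable_cong[OF realizable_seq[OF assms(1)[unfolded realizable_sparse_def, THEN conjunct1] assms(2)]])
  fix y x :: "bool list" assume "length x = n"
  then have "\<forall>(c, a)\<in>set (ts x). c \<in> bitstrings k"
    using assms(1) unfolding realizable_sparse_def by auto
  then show "(\<Sum>(c, a)\<leftarrow>ts x. B y c * a) = (\<Sum>c\<in>bitstrings k. B y c * sparse_lmap ts c x)"
    unfolding sparse_lmap_def sum_list_const_mult[symmetric] sum_sum_list_swap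
    by (intro arg_cong[where f = sum_list] map_cong) (auto simp: if_distrib cong: if_cong)
qed auto

lemma realizable_sparse_seq:
  assumes "realizable_sparse n k ts" "realizable_sparse k m us"
  shows "realizable_sparse n m (\<lambda>x. [(d, b * a). (c, a) \<leftarrow> ts x, (d, b) \<leftarrow> us c])"
  unfolding realizable_sparse_def
proof
  show "realizable n m (sparse_lmap (\<lambda>x. [(d, b * a). (c, a) \<leftarrow> ts x, (d, b) \<leftarrow> us c]))"
    using realizable_sparse_seq_realizable[OF assms(1) assms(2)[unfolded realizable_sparse_def, THEN conjunct1]]
    by (rule realizable_cong) (auto simp: sparse_lmap_def sum_list_mult_const[symmetric] map_concat sum_list_concat
        o_def split_def intro!: arg_cong[where f = sum_list] map_cong)
  show "\<forall>x. length x = n \<longrightarrow> (\<forall>(d, b)\<in>set [(d, b * a). (c, a) \<leftarrow> ts x, (d, b) \<leftarrow> us c]. length d = m)"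
    using assms unfolding realizable_sparse_def by fastforce
qed

lemma sum_list_append_split:
  fixes ts us :: "('a list \<times> 'b :: semiring_0) list"
  assumes "\<forall>(c, a)\<in>set ts. length c = m"
  shows "(\<Sum>(c, a)\<leftarrow>ts. \<Sum>(d, b)\<leftarrow>us. if y = c @ d then a * b else 0) =
    (\<Sum>(c, a)\<leftarrow>ts. if take m y = c then a else 0) * (\<Sum>(d, b)\<leftarrow>us. if drop m y = d then b else 0)"
proof -
  have "(\<Sum>(c, a)\<leftarrow>ts. \<Sum>(d, b)\<leftarrow>us. if y = c @ d then a * b else 0) =
      (\<Sum>(c, a)\<leftarrow>ts. \<Sum>(d, b)\<leftarrow>us. (if take m y = c then a else 0) * (if drop m y = d then b else 0))"
  proof (intro arg_cong[where f = sum_list] map_cong refl, clarify)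
    fix c a assume "(c, a) \<in> set ts"
    with assms have "length c = m" by auto
    then show "(\<Sum>(d, b)\<leftarrow>us. if y = c @ d then a * b else 0) =
        (\<Sum>(d, b)\<leftarrow>us. (if take m y = c then a else 0) * (if drop m y = d then b else 0))"
      by (intro arg_cong[where f = sum_list] map_cong refl) (auto simp: append_eq_conv_conj, metis append_take_drop_id)
  qed
  then show ?thesis
    unfolding sum_list_mult_const[symmetric] by (simp add: sum_list_const_mult[symmetric] split_def)
qed

lemma realizable_sparse_par:
  assumes "realizable_sparse n1 m1 ts" "realizable_sparse n2 m2 us"
  shows "realizable_sparse (n1 + n2) (m1 + m2)
    (\<lambda>x. [(c @ d, a * b). (c, a) \<leftarrow> ts (take n1 x), (d, b) \<leftarrow> us (drop n1 x)])"
proof (rule realizable_sparseI[OF realizable_par[OF assms[unfolded realizable_sparse_def, THEN conjunct1]]])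
  fix y x :: "bool list" assume "length x = n1 + n2"
  then have "length (take n1 x) = n1" "length (drop n1 x) = n2" by simp_all
  then have lengths: "\<forall>(c, a)\<in>set (ts (take n1 x)). length c = m1" "\<forall>(d, b)\<in>set (us (drop n1 x)). length d = m2"
    using assms unfolding realizable_sparse_def by blast+
  from lengths(1) show "sparse_lmap (\<lambda>x. [(c @ d, a * b). (c, a) \<leftarrow> ts (take n1 x), (d, b) \<leftarrow> us (drop n1 x)]) y x =
      sparse_lmap ts (take m1 y) (take n1 x) * sparse_lmap us (drop m1 y) (drop n1 x)"
    unfolding sparse_lmap_def sum_list_append_split[OF lengths(1), symmetric]
    by (simp add: map_concat sum_list_concat o_def split_def cong: if_cong)
  from lengths show "\<forall>(e, g)\<in>set [(c @ d, a * b). (c, a) \<leftarrow> ts (take n1 x), (d, b) \<leftarrow> us (drop n1 x)].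
      length e = m1 + m2"
    by fastforce
qed

lemma realizable_swap: "realizable_sparse 2 2 (\<lambda>x. [(rev x, 1)])"
  by (rule realizable_sparseI[OF realizable_gen[of Swap, simplified]]) (auto simp: numeral_eq_Suc length_Suc_conv)

lemma realizable_fswap: "realizable_sparse 2 2 (\<lambda>x. [(rev x, if x ! 0 \<and> x ! 1 then -1 else 1)])"
  by (rule realizable_sparseI[OF realizable_gen[of FSwap, simplified]]) (auto simp: numeral_eq_Suc length_Suc_conv)

lemma realizable_cap: "realizable_sparse 2 0 (\<lambda>x. [([], if x ! 0 = x ! 1 then 1 else 0)])"
  by (rule realizable_sparseI[OF realizable_gen[of DualDag, simplified]]) (auto simp: numeral_eq_Suc length_Suc_conv)

lemma realizable_white: "realizable_sparse 0 2 (\<lambda>_. [([False, False], 1), ([True, True], z)])"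
  by (rule realizable_sparseI[OF realizable_gen[of "White z", simplified]])
    (auto simp: sparse_lmap_def numeral_eq_Suc length_Suc_conv split: if_splits)

lemma realizable_black2: "realizable_sparse 0 2 (\<lambda>_. [([True, False], 1), ([False, True], 1)])"
  by (rule realizable_sparseI[OF realizable_gen[of Black2, simplified]])
    (auto simp: sparse_lmap_def numeral_eq_Suc length_Suc_conv split: if_splits)

lemma realizable_black3:
  "realizable_sparse 0 3 (\<lambda>_. [([True, False, False], 1), ([False, True, False], 1), ([False, False, True], 1)])"
  by (rule realizable_sparseI[OF realizable_gen[of Black3, simplified]])
    (auto simp: sparse_lmap_def numeral_eq_Suc length_Suc_conv split: if_splits)

lemma realizable_scalar: "realizable_sparse 0 0 (\<lambda>_. [([], s)])"
  by (rule realizable_sparse_lmap_cong[OF realizable_sparse_seq[OF realizable_white[of "s - 1"] realizable_cap]])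
    (auto simp: sparse_lmap_def)

lemma realizable_ket1: "realizable_sparse 0 1 (\<lambda>_. [([True], 1)])"
proof -
  have "realizable_sparse 3 1 (\<lambda>x. [([x ! 0], if x ! 1 = x ! 2 then 1 else 0)])"
    by (rule realizable_sparse_cong[OF realizable_sparse_par[OF realizable_sparse_id[of 1] realizable_cap]])
      (auto simp: numeral_eq_Suc length_Suc_conv)
  from realizable_sparse_seq[OF realizable_black3 this] show ?thesis
    by (rule realizable_sparse_lmap_cong) (auto simp: sparse_lmap_def)
qed

lemma realizable_caps:
  "realizable_sparse (n + n) 0 (\<lambda>x. [([], if take n x = rev (drop n x) then 1 else 0)])"
proof (induction n)
  case 0
  show ?case
    by (rule realizable_sparse_cong[OF realizable_sparse_id[of 0]]) auto
next
  case (Suc n)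
  have "realizable_sparse (Suc n + Suc n) 2
      (\<lambda>x. [([hd x, last x], if take n (tl (butlast x)) = rev (drop n (tl (butlast x))) then 1 else 0)])"
    by (rule realizable_sparse_cong[OF realizable_sparse_par[OF realizable_sparse_id[of 1]
          realizable_sparse_par[OF Suc.IH realizable_sparse_id[of 1]]]])
      (auto simp: length_Suc_Suc_conv)
  from realizable_sparse_seq[OF this realizable_cap] show ?case
    by (rule realizable_sparse_cong) (auto simp: length_Suc_Suc_conv)
qed

lemma realizable_bend:
  assumes "realizable 0 (m + n) S"
  shows "realizable n m (\<lambda>y x. S (y @ rev x) [])"
proof -
  have state: "realizable n (m + n + n) (\<lambda>c x. S (take (m + n) c) [] * (if drop (m + n) c = x then 1 else 0))"
    by (rule realizable_cong[OF realizable_par[OF assms realizable_id[of n]]]) auto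
  have caps: "realizable_sparse (m + n + n) m
      (\<lambda>c. [(take m c, if take n (drop m c) = rev (drop (m + n) c) then 1 else 0)])"
    by (rule realizable_sparse_cong[OF realizable_sparse_par[OF realizable_sparse_id[of m] realizable_caps[of n]]])
      (auto simp: add.commute)
  have "realizable n m (\<lambda>y x. \<Sum>c\<in>bitstrings (m + n + n).
      sparse_lmap (\<lambda>c. [(take m c, if take n (drop m c) = rev (drop (m + n) c) then 1 else 0)]) y c *
      (S (take (m + n) c) [] * (if drop (m + n) c = x then 1 else 0)))"
    using realizable_seq[OF state caps[unfolded realizable_sparse_def, THEN conjunct1]] .
  then show ?thesis
  proof (rule realizable_cong)
    fix y x :: "bool list" assume lengths: "length y = m" "length x = n"
    show "S (y @ rev x) [] = (\<Sum>c\<in>bitstrings (m + n + n).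
      sparse_lmap (\<lambda>c. [(take m c, if take n (drop m c) = rev (drop (m + n) c) then 1 else 0)]) y c *
      (S (take (m + n) c) [] * (if drop (m + n) c = x then 1 else 0)))"
    proof (subst sum_eq_single_nonzero[where v = "y @ rev x @ x"])
      fix c assume "c \<noteq> y @ rev x @ x"
      moreover have "c = take m c @ take n (drop m c) @ drop (m + n) c"
        by (metis append_take_drop_id drop_drop add.commute)
      ultimately show "sparse_lmap (\<lambda>c. [(take m c, if take n (drop m c) = rev (drop (m + n) c) then 1 else 0)]) y c *
          (S (take (m + n) c) [] * (if drop (m + n) c = x then 1 else 0)) = 0"
        by auto
    qed (use lengths in auto)
  qed auto
qed

lemma realizable_not: "realizable_sparse 1 1 (\<lambda>x. [([\<not> hd x], 1)])"
proof -
  have "realizable 0 (1 + 1) (sparse_lmap (\<lambda>_. [([True, False], 1), ([False, True], 1)]))"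
    by (rule realizable_cong[OF realizable_black2[unfolded realizable_sparse_def, THEN conjunct1]]) auto
  from realizable_bend[OF this] show ?thesis
    by (rule realizable_sparseI) (auto simp: sparse_lmap_def length_Suc_conv)
qed

lemma realizable_ket0: "realizable_sparse 0 1 (\<lambda>_. [([False], 1)])"
  by (rule realizable_sparse_cong[OF realizable_sparse_seq[OF realizable_ket1 realizable_not]]) auto

lemma realizable_bra1: "realizable_sparse 1 0 (\<lambda>x. [([], if hd x then 1 else 0)])"
proof -
  have "realizable 0 (0 + 1) (sparse_lmap (\<lambda>_. [([True], 1)]))"
    using realizable_ket1 unfolding realizable_sparse_def by simp
  from realizable_bend[OF this] show ?thesis
    by (rule realizable_sparseI) (auto simp: length_Suc_conv)
qed

lemma realizable_zeros: "realizable_sparse 0 k (\<lambda>_. [(replicate k False, 1)])"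
proof (induction k)
  case 0
  show ?case
    by (rule realizable_sparse_cong[OF realizable_sparse_id[of 0]]) auto
next
  case (Suc k)
  show ?case
    by (rule realizable_sparse_cong[OF realizable_sparse_par[OF realizable_ket0 Suc.IH]]) auto
qed

lemma realizable_or: "realizable_sparse 2 1 (\<lambda>x. [([x ! 0 \<or> x ! 1], if x ! 0 \<and> x ! 1 then 0 else 1)])"
proof -
  have "realizable 0 (1 + 2) (sparse_lmap
      (\<lambda>_. [([True, False, False], 1), ([False, True, False], 1), ([False, False, True], 1)]))"
    by (rule realizable_cong[OF realizable_black3[unfolded realizable_sparse_def, THEN conjunct1]]) auto
  from realizable_bend[OF this]
  have "realizable_sparse 2 1 (\<lambda>x. [([\<not> (x ! 0 \<or> x ! 1)], if x ! 0 \<and> x ! 1 then 0 else 1)])"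
    by (rule realizable_sparseI) (auto simp: sparse_lmap_def numeral_eq_Suc length_Suc_conv)
  from realizable_sparse_seq[OF this realizable_not] show ?thesis
    by (rule realizable_sparse_cong) auto
qed

lemma realizable_cz: "realizable_sparse 2 2 (\<lambda>x. [(x, if x ! 0 \<and> x ! 1 then -1 else 1)])"
  by (rule realizable_sparse_cong[OF realizable_sparse_seq[OF realizable_fswap realizable_swap]]) auto

lemma realizable_eq_projector: "realizable_sparse 2 2 (\<lambda>x. [(x, if x ! 0 = x ! 1 then 1 else 0)])"
proof -
  have cup: "realizable_sparse 2 4 (\<lambda>x. [([x ! 0, False, False, x ! 1], 1), ([x ! 0, True, True, x ! 1], 1)])"
    by (rule realizable_sparse_cong[OF realizable_sparse_par[OF realizable_sparse_id[of 1]
          realizable_sparse_par[OF realizable_white[of 1] realizable_sparse_id[of 1]]]])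
      (auto simp: numeral_eq_Suc length_Suc_conv)
  have signs: "realizable_sparse 4 4
      (\<lambda>x. [(x, (if x ! 0 \<and> x ! 1 then -1 else 1) * (if x ! 2 \<and> x ! 3 then -1 else 1))])"
    by (rule realizable_sparse_cong[OF realizable_sparse_par[OF realizable_cz realizable_cz]])
      (auto simp: numeral_eq_Suc length_Suc_conv)
  have cap: "realizable_sparse 4 2 (\<lambda>x. [([x ! 0, x ! 3], if x ! 1 = x ! 2 then 1 else 0)])"
    by (rule realizable_sparse_cong[OF realizable_sparse_par[OF realizable_sparse_id[of 1]
          realizable_sparse_par[OF realizable_cap realizable_sparse_id[of 1]]]])
      (auto simp: numeral_eq_Suc length_Suc_conv)
  \<comment> \<open>Summing the sign (-1)^((a + b) c) over the middle bit c gives 2 if a = b and 0 otherwise.\<close>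
  from realizable_sparse_par[OF realizable_scalar[of "1 / 2"]
      realizable_sparse_seq[OF realizable_sparse_seq[OF cup signs] cap]]
  show ?thesis
    by (rule realizable_sparse_lmap_cong) (auto simp: sparse_lmap_def numeral_eq_Suc length_Suc_conv)
qed

lemma realizable_copy3: "realizable_sparse 1 3 (\<lambda>x. [([hd x, hd x, hd x], 1)])"
proof -
  have cup: "realizable_sparse 1 3 (\<lambda>x. [(x @ [False, False], 1), (x @ [True, True], 1)])"
    by (rule realizable_sparse_cong[OF realizable_sparse_par[OF realizable_sparse_id[of 1] realizable_white[of 1]]])
      auto
  have "realizable_sparse 3 3 (\<lambda>x. [(x, if x ! 0 = x ! 1 then 1 else 0)])"
    by (rule realizable_sparse_cong[OF realizable_sparse_par[OF realizable_eq_projector realizable_sparse_id[of 1]]])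
      (auto simp: numeral_eq_Suc length_Suc_conv)
  from realizable_sparse_seq[OF cup this] show ?thesis
    by (rule realizable_sparse_lmap_cong) (auto simp: sparse_lmap_def length_Suc_conv)
qed

lemma realizable_rotate: "realizable_sparse (Suc k) (Suc k) (\<lambda>x. [(last x # butlast x, 1)])"
proof (induction k)
  case 0
  show ?case
    by (rule realizable_sparse_cong[OF realizable_sparse_id]) (auto simp: length_Suc_conv)
next
  case (Suc k)
  have "realizable_sparse (Suc (Suc k)) (Suc (Suc k)) (\<lambda>x. [(hd x # last x # butlast (tl x), 1)])"
    by (rule realizable_sparse_cong[OF realizable_sparse_par[OF realizable_sparse_id[of 1] Suc.IH]])
      (auto simp: length_Suc_Suc_conv)
  moreover have "realizable_sparse (Suc (Suc k)) (Suc (Suc k)) (\<lambda>x. [(x ! 1 # x ! 0 # drop 2 x, 1)])"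
    by (rule realizable_sparse_cong[OF realizable_sparse_par[OF realizable_swap realizable_sparse_id[of k]]])
      (auto simp: length_Suc_conv)
  ultimately show ?case
    by (rule realizable_sparse_cong[OF realizable_sparse_seq]) (auto simp: length_Suc_Suc_conv)
qed

lemma realizable_merge:
  "realizable_sparse (k + k) k (\<lambda>x. [(map2 (\<or>) (take k x) (drop k x),
      if list_all2 (\<lambda>a b. \<not> (a \<and> b)) (take k x) (drop k x) then 1 else 0)])"
proof (induction k)
  case 0
  show ?case
    by (rule realizable_sparse_cong[OF realizable_sparse_id[of 0]]) auto
next
  case (Suc k)
  have "realizable_sparse (Suc k + Suc k) (Suc k + Suc k)
      (\<lambda>x. [(hd x # x ! Suc k # take k (tl x) @ drop (Suc (Suc k)) x, 1)])"
    by (rule realizable_sparse_cong[OF realizable_sparse_par[OF realizable_sparse_id[of 1]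
          realizable_sparse_par[OF realizable_rotate[of k] realizable_sparse_id[of k]]]])
      (auto simp: length_Suc_Suc_add_conv nth_append)
  moreover have "realizable_sparse (Suc k + Suc k) (Suc k)
      (\<lambda>x. [((x ! 0 \<or> x ! 1) # map2 (\<or>) (take k (drop 2 x)) (drop (Suc (Suc k)) x),
        if \<not> (x ! 0 \<and> x ! 1) \<and> list_all2 (\<lambda>a b. \<not> (a \<and> b)) (take k (drop 2 x)) (drop (Suc (Suc k)) x)
        then 1 else 0)])"
    by (rule realizable_sparse_cong[OF realizable_sparse_par[OF realizable_or Suc.IH]])
      (auto simp: length_Suc_Suc_add_conv)
  ultimately show ?case
    by (rule realizable_sparse_cong[OF realizable_sparse_seq]) (auto simp: length_Suc_Suc_add_conv nth_append)
qed

lemma realizable_plug_first: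
  assumes "realizable 0 (Suc k) S"
  shows "realizable 0 k (\<lambda>y x. S (True # y) [])"
proof -
  have "realizable_sparse (Suc k) k (\<lambda>x. [(tl x, if hd x then 1 else 0)])"
    by (rule realizable_sparse_cong[OF realizable_sparse_par[OF realizable_bra1 realizable_sparse_id[of k]]])
      (auto simp: length_Suc_conv)
  from realizable_seq[OF assms this[unfolded realizable_sparse_def, THEN conjunct1]] show ?thesis
  proof (rule realizable_cong)
    fix y x :: "bool list" assume "length y = k" "length x = 0"
    show "S (True # y) [] = (\<Sum>c\<in>bitstrings (Suc k).
        sparse_lmap (\<lambda>x. [(tl x, if hd x then 1 else 0)]) y c * S c x)"
    proof (subst sum_eq_single_nonzero[where v = "True # y"])
      fix c assume "c \<in> bitstrings (Suc k)" "c \<noteq> True # y"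
      then show "sparse_lmap (\<lambda>x. [(tl x, if hd x then 1 else 0)]) y c * S c x = 0"
        by (cases c) auto
    qed (use \<open>length y = k\<close> \<open>length x = 0\<close> in auto)
  qed auto
qed

lemma realizable_insert_zero:
  "realizable_sparse (j + k) (j + 1 + k) (\<lambda>y. [(take j y @ False # drop j y, 1)])"
  by (rule realizable_sparse_cong[OF realizable_sparse_par[OF realizable_sparse_id[of j]
        realizable_sparse_par[OF realizable_ket0 realizable_sparse_id[of k]]]]) auto

text \<open>All gadgets used here are even, so a string can only be paired with the zero string if
  its weight is even: one or two leading ones serve both as marker and as parity padding.\<close>

lemma realizable_anchored_pair:
  "(even (weight x) \<longrightarrow> realizable_sparse 0 (length x + 2)
       (\<lambda>_. [(replicate (length x + 2) False, 1), (True # True # x, a)])) \<and>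
   (odd (weight x) \<longrightarrow> realizable_sparse 0 (length x + 1)
       (\<lambda>_. [(replicate (length x + 1) False, 1), (True # x, a)]))"
proof (induction x)
  case Nil
  show ?case
    by (simp add: realizable_sparse_cong[OF realizable_white[of a]])
next
  case (Cons b x)
  let ?k = "length x"
  show ?case
  proof (cases b)
    case False
    have "realizable_sparse 0 (length (b # x) + j) (\<lambda>_. [(replicate (length (b # x) + j) False, 1), (t @ b # x, a)])"
      if "realizable_sparse 0 (length x + j) (\<lambda>_. [(replicate (length x + j) False, 1), (t @ x, a)])"
        and "length t = j" for j t
      by (rule realizable_sparse_cong[OF realizable_sparse_seq[OF that(1)
            realizable_sparse_cong[OF realizable_insert_zero[of j ?k]]]])
        (auto simp: False that(2) add.commute replicate_add replicate_app_Cons_same)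
    from this[of 2 "[True, True]"] this[of 1 "[True]"] show ?thesis
      using Cons.IH False by simp
  next
    case True
    have "realizable_sparse 0 (?k + 1 + 2) (\<lambda>_. [(replicate (?k + 1 + 2) False, 1), (True # True # True # x, a)])"
      if "odd (weight x)"
    proof -
      have "realizable_sparse (?k + 1) (?k + 3) (\<lambda>y. [(hd y # hd y # y, 1)])"
        by (rule realizable_sparse_cong[OF realizable_sparse_par[OF realizable_copy3 realizable_sparse_id[of ?k]]])
          (auto simp: length_Suc_conv)
      moreover have "realizable_sparse 0 (?k + 1) (\<lambda>_. [(replicate (?k + 1) False, 1), (True # x, a)])"
        using Cons.IH that by simp
      ultimately show ?thesis
        by (rule realizable_sparse_cong[OF realizable_sparse_seq[rotated]]) auto
    qed
    then show ?thesis
      using Cons.IH True by (auto simp: add.commute)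
  qed
qed

lemma realizable_anchored_append:
  assumes ps: "realizable_sparse 0 (Suc k) (\<lambda>_. (replicate (Suc k) False, 1) # ps)"
    and qs: "realizable_sparse 0 (Suc k) (\<lambda>_. (replicate (Suc k) False, 1) # qs)"
    and marked: "\<forall>(c, a)\<in>set ps. hd c" "\<forall>(d, b)\<in>set qs. hd d"
  shows "realizable_sparse 0 (Suc k) (\<lambda>_. (replicate (Suc k) False, 1) # ps @ qs)"
proof -
  let ?P = "\<lambda>a b. \<not> (a \<and> b)"
  have len: "length (fst p) = Suc k" if "p \<in> set ps" for p
    using ps that unfolding realizable_sparse_def by fastforce
  have len': "length (fst p) = Suc k" if "p \<in> set qs" for p
    using qs that unfolding realizable_sparse_def by fastforce
  have hd: "hd (fst p)" if "p \<in> set ps" for p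
    using marked that by auto
  have hd': "hd (fst p)" if "p \<in> set qs" for p
    using marked that by auto
  \<comment> \<open>The following facts are stated in the simplifier's normal form of map2 and of the
    disjointness test, so that they fire during the final simplification.\<close>
  have zero_left: "map (\<lambda>p. fst p \<or> snd p) (zip (replicate n False) d) = d" "list_all2 (\<lambda>a b. a \<longrightarrow> \<not> b) (replicate n False) d"
    if "length d = n" for d n
    using that by (auto simp: list_all2_conv_all_nth list_eq_iff_nth_eq)
  have zero_right: "map (\<lambda>p. fst p \<or> snd p) (zip c (replicate n False)) = c" "list_all2 (\<lambda>a b. a \<longrightarrow> \<not> b) c (replicate n False)"
    if "length c = n" for c n
    using that by (auto simp: list_all2_conv_all_nth list_eq_iff_nth_eq)
  have overlap: "\<not> list_all2 (\<lambda>a b. a \<longrightarrow> \<not> b) c d" if "hd c" "hd d" "length c = Suc k" "length d = Suc k" for c d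
    using that by (cases c; cases d) auto
  from realizable_sparse_seq[OF realizable_sparse_par[OF ps qs] realizable_merge]
  show ?thesis
  proof (rule realizable_sparse_lmap_cong)
    fix y x :: "bool list" assume "length y = Suc k"
    then show "sparse_lmap (\<lambda>_. (replicate (Suc k) False, 1) # ps @ qs) y x = sparse_lmap
      (\<lambda>x. [(e, g * ab). (cd, ab) \<leftarrow> [(c @ d, a * b). (c, a) \<leftarrow> (replicate (Suc k) False, 1) # ps,
                                                 (d, b) \<leftarrow> (replicate (Suc k) False, 1) # qs],
                        (e, g) \<leftarrow> [(map2 (\<or>) (take (Suc k) cd) (drop (Suc k) cd),
                                    if list_all2 ?P (take (Suc k) cd) (drop (Suc k) cd) then 1 else 0)]]) y x"
      unfolding sparse_lmap_def
      by (simp add: map_concat sum_list_concat o_def split_def len len' hd hd' zero_left zero_right overlap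
          cong: map_cong if_cong del: replicate_Suc)
  qed (auto dest: len len')
qed

lemma realizable_anchored_state:
  assumes "\<forall>(w, a)\<in>set ps. length w = k \<and> odd (weight w)"
  shows "realizable_sparse 0 (Suc k) (\<lambda>_. (replicate (Suc k) False, 1) # [(True # w, a). (w, a) \<leftarrow> ps])"
  using assms
proof (induction ps)
  case Nil
  show ?case
    by (rule realizable_sparse_cong[OF realizable_zeros]) auto
next
  case (Cons p ps)
  obtain w a where p: "p = (w, a)" and w: "length w = k" "odd (weight w)"
    using Cons.prems by (cases p) auto
  have "realizable_sparse 0 (Suc k) (\<lambda>_. [(replicate (Suc k) False, 1), (True # w, a)])"
    using realizable_anchored_pair[of w a] w by simp
  moreover have "realizable_sparse 0 (Suc k) (\<lambda>_. (replicate (Suc k) False, 1) # [(True # w, a). (w, a) \<leftarrow> ps])"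
    using Cons by simp
  moreover have "\<forall>(d, b)\<in>set [(True # w, a). (w, a) \<leftarrow> ps]. hd d"
    by auto
  ultimately show ?case
    using realizable_anchored_append[of k "[(True # w, a)]"] by (simp add: p)
qed

lemma realizable_odd_state:
  assumes "\<And>y. length y = k \<Longrightarrow> \<psi> y [] \<noteq> 0 \<Longrightarrow> odd (weight y)"
  shows "realizable 0 k \<psi>"
proof -
  define ws where "ws = filter (\<lambda>w. odd (weight w)) (List.n_lists k [False, True])"
  have "realizable_sparse 0 (Suc k)
      (\<lambda>_. (replicate (Suc k) False, 1) # [(True # w, a). (w, a) \<leftarrow> map (\<lambda>w. (w, \<psi> w [])) ws])"
    by (rule realizable_anchored_state) (auto simp: ws_def set_n_lists)
  from realizable_plug_first[OF this[unfolded realizable_sparse_def, THEN conjunct1]] show ?thesis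
  proof (rule realizable_cong)
    fix y x :: "bool list" assume y: "length y = k" and "length x = 0"
    have "sparse_lmap (\<lambda>_. (replicate (Suc k) False, 1) #
        [(True # w, a). (w, a) \<leftarrow> map (\<lambda>w. (w, \<psi> w [])) ws]) (True # y) [] =
        (\<Sum>w\<leftarrow>ws. if y = w then \<psi> w [] else 0)"
      by (simp add: sparse_lmap_def o_def)
    also have "\<dots> = (if y \<in> set ws then \<psi> y [] else 0)"
      by (simp add: ws_def distinct_n_lists sum_list_distinct_conv_sum_set sum.delta')
    also have "\<dots> = \<psi> y x"
      using assms[of y] y \<open>length x = 0\<close> by (auto simp: ws_def set_n_lists)
    finally show "\<psi> y x = sparse_lmap (\<lambda>_. (replicate (Suc k) False, 1) #
        [(True # w, a). (w, a) \<leftarrow> map (\<lambda>w. (w, \<psi> w [])) ws]) (True # y) []"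
      by simp
  qed auto
qed

lemma realizable_homogeneous_state:
  assumes "\<And>y z. length y = k \<Longrightarrow> length z = k \<Longrightarrow> \<psi> y [] \<noteq> 0 \<Longrightarrow> \<psi> z [] \<noteq> 0 \<Longrightarrow>
      even (weight y) \<longleftrightarrow> even (weight z)"
  shows "realizable 0 k \<psi>"
proof (cases "\<exists>z. length z = k \<and> \<psi> z [] \<noteq> 0 \<and> even (weight z)")
  case False
  then show ?thesis
    by (intro realizable_odd_state) auto
next
  case True
  then have even: "even (weight y)" if "length y = k" "\<psi> y [] \<noteq> 0" for y
    using assms that by blast
  have "realizable 0 (Suc k) (\<lambda>y x. if hd y then \<psi> (tl y) [] else 0)"
  proof (rule realizable_odd_state)
    fix y :: "bool list" assume "length y = Suc k" "(if hd y then \<psi> (tl y) [] else 0) \<noteq> 0"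
    then show "odd (weight y)"
      using even[of "tl y"] by (cases y) (auto split: if_splits)
  qed
  from realizable_plug_first[OF this] show ?thesis
    by (rule realizable_cong) auto
qed

lemma pure_map_parity:
  assumes "pure_map n m M"
    and "length y = m + n" "M (take m y) (rev (drop m y)) \<noteq> 0"
    and "length z = m + n" "M (take m z) (rev (drop m z)) \<noteq> 0"
  shows "even (weight y) \<longleftrightarrow> even (weight z)"
proof -
  have parity: "even (weight w) \<longleftrightarrow> (even (weight (take m w)) \<longleftrightarrow> even (weight (rev (drop m w))))" for w
    by (metis append_take_drop_id weight_append weight_rev even_add)
  from assms(1) consider (even) "even_map n m M" | (odd) "odd_map n m M"
    unfolding pure_map_def by blast
  then show ?thesis
  proof cases
    case even
    have "even (weight w)" if "length w = m + n" "M (take m w) (rev (drop m w)) \<noteq> 0" for w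
      using even[unfolded even_map_def, rule_format, of "take m w" "rev (drop m w)"] that parity[of w] by simp
    with assms(2-5) show ?thesis by blast
  next
    case odd
    have "odd (weight w)" if "length w = m + n" "M (take m w) (rev (drop m w)) \<noteq> 0" for w
      using odd[unfolded odd_map_def, rule_format, of "take m w" "rev (drop m w)"] that parity[of w] by simp
    with assms(2-5) show ?thesis by blast
  qed
qed

theorem theorem4p1:
  fixes n m :: nat and M :: lmap
  assumes "pure_map n m M"
  shows "\<exists>d. wf_diag d \<and> ddom d = n \<and> dcod d = m \<and>
    (\<forall>out inp. length out = m \<longrightarrow> length inp = n \<longrightarrow> interp d out inp = M out inp)"
proof -
  define S where "S w (z :: bool list) = M (take m w) (rev (drop m w))" for w z
  have "realizable 0 (m + n) S"
  proof (rule realizable_homogeneous_state)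
    fix y z :: "bool list"
    assume "length y = m + n" "length z = m + n" "S y [] \<noteq> 0" "S z [] \<noteq> 0"
    then show "even (weight y) \<longleftrightarrow> even (weight z)"
      using pure_map_parity[OF assms] unfolding S_def by blast
  qed
  from realizable_bend[OF this] have "realizable n m M"
    by (rule realizable_cong) (simp_all add: S_def)
  then show ?thesis
    unfolding realizable_def .
qed

end
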